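(* (Knaster–Tarski proof principle) Let $\mathscr{S}$ be an expressivity situation and $x\colon X\to BX$ a $B$-coalgebra. If the set $\{[\![\varphi]\!]_x\mid\varphi\in L_{\mathscr{S}}\}\subseteq\mathcal{C}(X,\Omega)$ is an approximating family, then $\mathscr{S}$ is expressive for $x$, i.e. $\nu\bigl(x^*\circ\overline{B}^{\underline{\Omega},\tau}\bigr)\sqsupseteq\bigwedge_{\varphi\in L_{\mathscr{S}}}[\![\varphi]\!]_x^{*}\underline{\Omega}$.
   Context: An expressivity situation $\mathscr{S}=(p,B,\Omega,\underline{\Omega},\Sigma,\Lambda,(f_\sigma),(\tau_\lambda))$ consists of: a fibration $p\colon\mathcal{E}\to\mathcal{C}$ whose fibers $\mathcal{E}_X$ are complete lattices (order $\sqsubseteq$, meets $\bigwedge$) with meet-preserving reindexing $f^*$; a functor $B\colon\mathcal{C}\to\mathcal{C}$; $\Omega\in\mathcal{C}$ with finite powers and $\underline{\Omega}\in\mathcal{E}$ above $\Omega$; a ranked alphabet $\Sigma$ with arrows $f_\sigma\colon\Omega^{\mathrm{rank}(\sigma)}\to\Omega$ each lifting to some $g_\sigma\colon\underline{\Omega}^{\mathrm{rank}(\sigma)}\to\underline{\Omega}$ with $pg_\sigma=f_\sigma$; a set $\Lambda$ and arrows $\tau_\lambda\colon B\Omega\to\Omega$. Formulas of $L_{\mathscr{S}}$: $\varphi::=\sigma(\varphi_1,\dots,\varphi_{\mathrm{rank}(\sigma)})\mid\heartsuit_\lambda\varphi$, with semantics $[\![\sigma(\varphi_1,\dots)]\!]_x=f_\sigma\circ\langle[\![\varphi_1]\!]_x,\dots\rangle$,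 $[\![\heartsuit_\lambda\varphi]\!]_x=\tau_\lambda\circ B[\![\varphi]\!]_x\circ x$. Codensity lifting: $\overline{B}^{\underline{\Omega},\tau}P=\bigwedge_{\lambda\in\Lambda,\,h\in\mathcal{E}(P,\underline{\Omega})}(\tau_\lambda\circ B(ph))^*\underline{\Omega}$; codensity bisimilarity is the greatest fixed point $\nu(x^*\circ\overline{B}^{\underline{\Omega},\tau})$ in $\mathcal{E}_X$. A subset $S\subseteq\mathcal{C}(X,\Omega)$ is an approximating family if for every $\mathcal{E}$-arrow $h\colon\bigwedge_{k\in S}k^*\underline{\Omega}\to\underline{\Omega}$ and every $\lambda\in\Lambda$, $\bigwedge_{k'\in S,\lambda'\in\Lambda}(\tau_{\lambda'}\circ Bk')^*\underline{\Omega}\sqsubseteq(\tau_\lambda\circ B(ph))^*\underline{\Omega}$. *)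

theory Defs
  imports Main
begin

record ('o, 'a) cat =
  Ob    :: "'o set"
  Hom   :: "'o \<Rightarrow> 'o \<Rightarrow> 'a set"
  comp  :: "'a \<Rightarrow> 'a \<Rightarrow> 'a"    (* comp C g f = g \<circ> f *)
  ident :: "'o \<Rightarrow> 'a"

definition category :: "('o, 'a) cat \<Rightarrow> bool" where
  "category C \<longleftrightarrow>
     (\<forall>X Y. \<forall>f \<in> Hom C X Y. X \<in> Ob C \<and> Y \<in> Ob C) \<and>
     (\<forall>X Y X' Y'. \<forall>f. f \<in> Hom C X Y \<and> f \<in> Hom C X' Y' \<longrightarrow> X = X' \<and> Y = Y') \<and>
     (\<forall>X Y Z f g. f \<in> Hom C X Y \<and> g \<in> Hom C Y Z \<longrightarrow> comp C g f \<in> Hom C X Z) \<and>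
     (\<forall>W X Y Z f g h. f \<in> Hom C W X \<and> g \<in> Hom C X Y \<and> h \<in> Hom C Y Z \<longrightarrow>
          comp C h (comp C g f) = comp C (comp C h g) f) \<and>
     (\<forall>X \<in> Ob C. ident C X \<in> Hom C X X) \<and>
     (\<forall>X Y f. f \<in> Hom C X Y \<longrightarrow> comp C f (ident C X) = f \<and> comp C (ident C Y) f = f)"

definition endofunctor :: "('o, 'a) cat \<Rightarrow> ('o \<Rightarrow> 'o) \<Rightarrow> ('a \<Rightarrow> 'a) \<Rightarrow> bool" where
  "endofunctor C Bo Ba \<longleftrightarrow>
     (\<forall>X \<in> Ob C. Bo X \<in> Ob C) \<and>
     (\<forall>X Y f. f \<in> Hom C X Y \<longrightarrow> Ba f \<in> Hom C (Bo X) (Bo Y)) \<and>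
     (\<forall>X Y Z f g. f \<in> Hom C X Y \<and> g \<in> Hom C Y Z \<longrightarrow> Ba (comp C g f) = comp C (Ba g) (Ba f)) \<and>
     (\<forall>X \<in> Ob C. Ba (ident C X) = ident C (Bo X))"

definition finite_powers ::
  "('o, 'a) cat \<Rightarrow> 'o \<Rightarrow> (nat \<Rightarrow> 'o) \<Rightarrow> (nat \<Rightarrow> nat \<Rightarrow> 'a) \<Rightarrow> ('o \<Rightarrow> 'a list \<Rightarrow> 'a) \<Rightarrow> bool" where
  "finite_powers C W pw prj tup \<longleftrightarrow>
     (\<forall>n. pw n \<in> Ob C) \<and>
     (\<forall>n i. i < n \<longrightarrow> prj n i \<in> Hom C (pw n) W) \<and>
     (\<forall>X \<in> Ob C. \<forall>fs. (\<forall>f \<in> set fs. f \<in> Hom C X W) \<longrightarrow>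
         tup X fs \<in> Hom C X (pw (length fs)) \<and>
         (\<forall>i < length fs. comp C (prj (length fs) i) (tup X fs) = fs ! i) \<and>
         (\<forall>u \<in> Hom C X (pw (length fs)).
             (\<forall>i < length fs. comp C (prj (length fs) i) u = fs ! i) \<longrightarrow> u = tup X fs))"

text \<open>A fibration p whose fibers are complete lattices (posets) is given, up to
  equivalence, by its fibers E_X, the fiber orders and the reindexing maps f^*.
  E-arrows P -> Q above f : X -> Y correspond exactly to the inequalities
  P below f^* Q (there is at most one such arrow, since fibers are thin).\<close>

record ('o, 'a, 'e) fibr =
  Fib :: "'o \<Rightarrow> 'e set"
  le  :: "'e \<Rightarrow> 'e \<Rightarrow> bool"
  rdx :: "'a \<Rightarrow> 'e \<Rightarrow> 'e"

definition is_meet :: "('o, 'a, 'e) fibr \<Rightarrow> 'o \<Rightarrow> 'e set \<Rightarrow> 'e \<Rightarrow> bool" where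
  "is_meet p X S m \<longleftrightarrow> m \<in> Fib p X \<and> (\<forall>s \<in> S. le p m s) \<and>
     (\<forall>m' \<in> Fib p X. (\<forall>s \<in> S. le p m' s) \<longrightarrow> le p m' m)"

definition fmeet :: "('o, 'a, 'e) fibr \<Rightarrow> 'o \<Rightarrow> 'e set \<Rightarrow> 'e" where
  "fmeet p X S = (THE m. is_meet p X S m)"

definition clat_fibration :: "('o, 'a) cat \<Rightarrow> ('o, 'a, 'e) fibr \<Rightarrow> bool" where
  "clat_fibration C p \<longleftrightarrow>
     (\<forall>X \<in> Ob C. \<forall>P \<in> Fib p X. le p P P) \<and>
     (\<forall>X \<in> Ob C. \<forall>P \<in> Fib p X. \<forall>Q \<in> Fib p X. le p P Q \<and> le p Q P \<longrightarrow> P = Q) \<and>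
     (\<forall>X \<in> Ob C. \<forall>P \<in> Fib p X. \<forall>Q \<in> Fib p X. \<forall>R \<in> Fib p X.
          le p P Q \<and> le p Q R \<longrightarrow> le p P R) \<and>
     (\<forall>X \<in> Ob C. \<forall>S \<subseteq> Fib p X. \<exists>m. is_meet p X S m) \<and>
     (\<forall>X Y f. f \<in> Hom C X Y \<longrightarrow> (\<forall>P \<in> Fib p Y. rdx p f P \<in> Fib p X)) \<and>
     (\<forall>X Y f. f \<in> Hom C X Y \<longrightarrow>
          (\<forall>S \<subseteq> Fib p Y. rdx p f (fmeet p Y S) = fmeet p X (rdx p f ` S))) \<and>
     (\<forall>X \<in> Ob C. \<forall>P \<in> Fib p X. rdx p (ident C X) P = P) \<and>
     (\<forall>X Y Z f g. f \<in> Hom C X Y \<and> g \<in> Hom C Y Z \<longrightarrow>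
          (\<forall>P \<in> Fib p Z. rdx p (comp C g f) P = rdx p f (rdx p g P)))"

definition expressivity_situation ::
  "('o, 'a) cat \<Rightarrow> ('o, 'a, 'e) fibr \<Rightarrow> ('o \<Rightarrow> 'o) \<Rightarrow> ('a \<Rightarrow> 'a) \<Rightarrow>
   'o \<Rightarrow> (nat \<Rightarrow> 'o) \<Rightarrow> (nat \<Rightarrow> nat \<Rightarrow> 'a) \<Rightarrow> ('o \<Rightarrow> 'a list \<Rightarrow> 'a) \<Rightarrow> 'e \<Rightarrow>
   ('s \<Rightarrow> nat) \<Rightarrow> ('s \<Rightarrow> 'a) \<Rightarrow> ('l \<Rightarrow> 'a) \<Rightarrow> bool" where
  "expressivity_situation C p Bo Ba W pw prj tup Wl rank fsig tau \<longleftrightarrow>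
     category C \<and> clat_fibration C p \<and> endofunctor C Bo Ba \<and>
     W \<in> Ob C \<and> finite_powers C W pw prj tup \<and> Wl \<in> Fib p W \<and>
     (\<forall>\<sigma>. fsig \<sigma> \<in> Hom C (pw (rank \<sigma>)) W \<and>
        \<comment> \<open>f_sigma lifts to an E-arrow from the power of Wl (the meet of the
            reindexed copies of Wl along the projections) to Wl\<close>
        le p (fmeet p (pw (rank \<sigma>)) {rdx p (prj (rank \<sigma>) i) Wl | i. i < rank \<sigma>})
             (rdx p (fsig \<sigma>) Wl)) \<and>
     (\<forall>l. tau l \<in> Hom C (Bo W) W)"

datatype ('s, 'l) form = Op 's "('s, 'l) form list" | Mod 'l "('s, 'l) form"

fun wf_form :: "('s \<Rightarrow> nat) \<Rightarrow> ('s, 'l) form \<Rightarrow> bool" where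
  "wf_form rank (Op \<sigma> \<phi>s) \<longleftrightarrow> length \<phi>s = rank \<sigma> \<and> (\<forall>\<phi> \<in> set \<phi>s. wf_form rank \<phi>)"
| "wf_form rank (Mod l \<phi>) \<longleftrightarrow> wf_form rank \<phi>"

fun sem :: "('o, 'a) cat \<Rightarrow> ('a \<Rightarrow> 'a) \<Rightarrow> ('o \<Rightarrow> 'a list \<Rightarrow> 'a) \<Rightarrow> ('s \<Rightarrow> 'a) \<Rightarrow> ('l \<Rightarrow> 'a) \<Rightarrow>
            'o \<Rightarrow> 'a \<Rightarrow> ('s, 'l) form \<Rightarrow> 'a" where
  "sem C Ba tup fsig tau X x (Op \<sigma> \<phi>s) =
     comp C (fsig \<sigma>) (tup X (map (sem C Ba tup fsig tau X x) \<phi>s))"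
| "sem C Ba tup fsig tau X x (Mod l \<phi>) =
     comp C (tau l) (comp C (Ba (sem C Ba tup fsig tau X x \<phi>)) x)"

text \<open>codensity lifting of P in E_X: meet over lambda and E-arrows h : P -> Wl,
  the latter represented by their projections k = p h, i.e. k : X -> W with
  P below k^* Wl.\<close>

definition codensity_lifting ::
  "('o, 'a) cat \<Rightarrow> ('o, 'a, 'e) fibr \<Rightarrow> ('o \<Rightarrow> 'o) \<Rightarrow> ('a \<Rightarrow> 'a) \<Rightarrow> 'o \<Rightarrow> 'e \<Rightarrow>
   ('l \<Rightarrow> 'a) \<Rightarrow> 'o \<Rightarrow> 'e \<Rightarrow> 'e" where
  "codensity_lifting C p Bo Ba W Wl tau X P =
     fmeet p (Bo X) {rdx p (comp C (tau l) (Ba k)) Wl | l k.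
                       k \<in> Hom C X W \<and> le p P (rdx p k Wl)}"

definition fgfp :: "('o, 'a, 'e) fibr \<Rightarrow> 'o \<Rightarrow> ('e \<Rightarrow> 'e) \<Rightarrow> 'e" where
  "fgfp p X F = (THE R. R \<in> Fib p X \<and> F R = R \<and>
                        (\<forall>S \<in> Fib p X. F S = S \<longrightarrow> le p S R))"

definition codensity_bisim ::
  "('o, 'a) cat \<Rightarrow> ('o, 'a, 'e) fibr \<Rightarrow> ('o \<Rightarrow> 'o) \<Rightarrow> ('a \<Rightarrow> 'a) \<Rightarrow> 'o \<Rightarrow> 'e \<Rightarrow>
   ('l \<Rightarrow> 'a) \<Rightarrow> 'o \<Rightarrow> 'a \<Rightarrow> 'e" where
  "codensity_bisim C p Bo Ba W Wl tau X x =
     fgfp p X (\<lambda>R. rdx p x (codensity_lifting C p Bo Ba W Wl tau X R))"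

definition approximating_family ::
  "('o, 'a) cat \<Rightarrow> ('o, 'a, 'e) fibr \<Rightarrow> ('o \<Rightarrow> 'o) \<Rightarrow> ('a \<Rightarrow> 'a) \<Rightarrow> 'o \<Rightarrow> 'e \<Rightarrow>
   ('l \<Rightarrow> 'a) \<Rightarrow> 'o \<Rightarrow> 'a set \<Rightarrow> bool" where
  "approximating_family C p Bo Ba W Wl tau X S \<longleftrightarrow>
     S \<subseteq> Hom C X W \<and>
     (\<forall>h \<in> Hom C X W. le p (fmeet p X {rdx p k Wl | k. k \<in> S}) (rdx p h Wl) \<longrightarrow>
        (\<forall>l. le p (fmeet p (Bo X) {rdx p (comp C (tau l') (Ba k')) Wl | k' l'. k' \<in> S})
                    (rdx p (comp C (tau l) (Ba h)) Wl)))"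

end

theory Submission
  imports Defs
begin

(* The meet M of the pullbacks [[phi]]^* Wl is a post-fixed point of x^* o codensity lifting,
   and by Knaster-Tarski every post-fixed point lies below the greatest fixed point.
   Post-fixedness uses only that the formula semantics form an approximating family closed
   under the modal steps k |-> tau l o B k o x: by closure, and because x^* preserves meets,
   M lies below x^* N for the meet N of the modal tests (tau l o B k)^* Wl; approximation
   puts N below the codensity lifting of M; and x^* is monotone. *)

lemma post_fixed_point_below_greatest_fixed_point:
  fixes le :: "'e \<Rightarrow> 'e \<Rightarrow> bool" and glb :: "'e set \<Rightarrow> 'e"
  assumes refl: "\<And>P. P \<in> A \<Longrightarrow> le P P"
    and antisym: "\<And>P Q. P \<in> A \<Longrightarrow> Q \<in> A \<Longrightarrow> le P Q \<Longrightarrow> le Q P \<Longrightarrow> P = Q"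
    and trans: "\<And>P Q R. P \<in> A \<Longrightarrow> Q \<in> A \<Longrightarrow> R \<in> A \<Longrightarrow> le P Q \<Longrightarrow> le Q R \<Longrightarrow> le P R"
    and glb_closed: "\<And>S. S \<subseteq> A \<Longrightarrow> glb S \<in> A"
    and glb_lower: "\<And>S s. S \<subseteq> A \<Longrightarrow> s \<in> S \<Longrightarrow> le (glb S) s"
    and glb_greatest:
      "\<And>S m. S \<subseteq> A \<Longrightarrow> m \<in> A \<Longrightarrow> (\<And>s. s \<in> S \<Longrightarrow> le m s) \<Longrightarrow> le m (glb S)"
    and closed: "\<And>R. R \<in> A \<Longrightarrow> F R \<in> A"
    and mono: "\<And>R R'. R \<in> A \<Longrightarrow> R' \<in> A \<Longrightarrow> le R R' \<Longrightarrow> le (F R) (F R')"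
    and post: "m \<in> A" "le m (F m)"
  shows "\<exists>u\<in>A. F u = u \<and> (\<forall>S\<in>A. F S = S \<longrightarrow> le S u) \<and> le m u"
proof -
  define Post where "Post = {s\<in>A. le s (F s)}"
  define Upper where "Upper = {v\<in>A. \<forall>s\<in>Post. le s v}"
  \<comment> \<open>the join of all post-fixed points\<close>
  define u where "u = glb Upper"
  have u: "u \<in> A" unfolding u_def Upper_def by (rule glb_closed) auto
  have below_u: "le s u" if "s \<in> Post" for s
    unfolding u_def using that by (intro glb_greatest) (auto simp: Upper_def Post_def)
  have "le s (F u)" if "s \<in> Post" for s
  proof -
    from that have "s \<in> A" "le s (F s)" by (auto simp: Post_def)
    moreover have "le (F s) (F u)" using mono[OF \<open>s \<in> A\<close> u below_u[OF that]] .
    ultimately show ?thesis using trans closed u by blast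
  qed
  then have "F u \<in> Upper" unfolding Upper_def using closed u by blast
  then have u_post: "le u (F u)" unfolding u_def by (rule glb_lower[rotated]) (auto simp: Upper_def)
  then have "F u \<in> Post" unfolding Post_def using closed u mono by blast
  then have "F u = u" using antisym below_u u_post closed u by blast
  moreover have "\<forall>S\<in>A. F S = S \<longrightarrow> le S u" using below_u refl unfolding Post_def by auto
  moreover have "le m u" using below_u post unfolding Post_def by auto
  ultimately show ?thesis using u by blast
qed

locale clat_fibred_category =
  fixes C :: "('o, 'a) cat" and p :: "('o, 'a, 'e) fibr"
  assumes category: "category C" and clat_fibration: "clat_fibration C p"
begin

lemma Hom_Ob: "f \<in> Hom C X Y \<Longrightarrow> X \<in> Ob C \<and> Y \<in> Ob C"
  using category unfolding category_def by (elim conjE) blast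

lemma comp_in_Hom: "f \<in> Hom C X Y \<Longrightarrow> g \<in> Hom C Y Z \<Longrightarrow> comp C g f \<in> Hom C X Z"
  using category unfolding category_def by (elim conjE) blast

lemma comp_Hom_assoc:
  "f \<in> Hom C V X \<Longrightarrow> g \<in> Hom C X Y \<Longrightarrow> h \<in> Hom C Y Z \<Longrightarrow>
   comp C h (comp C g f) = comp C (comp C h g) f"
  using category unfolding category_def by (elim conjE) blast

lemma fibre_refl: "X \<in> Ob C \<Longrightarrow> P \<in> Fib p X \<Longrightarrow> le p P P"
  using clat_fibration unfolding clat_fibration_def by (elim conjE) metis

lemma fibre_antisym:
  "X \<in> Ob C \<Longrightarrow> P \<in> Fib p X \<Longrightarrow> Q \<in> Fib p X \<Longrightarrow> le p P Q \<Longrightarrow> le p Q P \<Longrightarrow> P = Q"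
  using clat_fibration unfolding clat_fibration_def by (elim conjE) metis

lemma fibre_trans:
  "X \<in> Ob C \<Longrightarrow> P \<in> Fib p X \<Longrightarrow> Q \<in> Fib p X \<Longrightarrow> R \<in> Fib p X \<Longrightarrow>
   le p P Q \<Longrightarrow> le p Q R \<Longrightarrow> le p P R"
  using clat_fibration unfolding clat_fibration_def by (elim conjE) metis

lemma fibre_meet_exists: "X \<in> Ob C \<Longrightarrow> S \<subseteq> Fib p X \<Longrightarrow> \<exists>m. is_meet p X S m"
  using clat_fibration unfolding clat_fibration_def by (elim conjE) metis

lemma rdx_in_Fib: "f \<in> Hom C X Y \<Longrightarrow> P \<in> Fib p Y \<Longrightarrow> rdx p f P \<in> Fib p X"
  using clat_fibration unfolding clat_fibration_def by (elim conjE) metis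

lemma rdx_fmeet:
  "f \<in> Hom C X Y \<Longrightarrow> S \<subseteq> Fib p Y \<Longrightarrow> rdx p f (fmeet p Y S) = fmeet p X (rdx p f ` S)"
  using clat_fibration unfolding clat_fibration_def by (elim conjE) metis

lemma rdx_comp:
  "f \<in> Hom C X Y \<Longrightarrow> g \<in> Hom C Y Z \<Longrightarrow> P \<in> Fib p Z \<Longrightarrow>
   rdx p (comp C g f) P = rdx p f (rdx p g P)"
  using clat_fibration unfolding clat_fibration_def by (elim conjE) metis

lemma fmeet_eqI:
  assumes "X \<in> Ob C" and "is_meet p X S m"
  shows "fmeet p X S = m"
  unfolding fmeet_def
proof (rule the_equality)
  show "m' = m" if "is_meet p X S m'" for m'
    using that assms fibre_antisym unfolding is_meet_def by blast
qed (fact assms(2))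

lemma fmeet_is_meet: "X \<in> Ob C \<Longrightarrow> S \<subseteq> Fib p X \<Longrightarrow> is_meet p X S (fmeet p X S)"
  using fibre_meet_exists fmeet_eqI by metis

lemma fmeet_in_Fib: "X \<in> Ob C \<Longrightarrow> S \<subseteq> Fib p X \<Longrightarrow> fmeet p X S \<in> Fib p X"
  using fmeet_is_meet unfolding is_meet_def by blast

lemma fmeet_lower: "X \<in> Ob C \<Longrightarrow> S \<subseteq> Fib p X \<Longrightarrow> s \<in> S \<Longrightarrow> le p (fmeet p X S) s"
  using fmeet_is_meet unfolding is_meet_def by blast

lemma fmeet_greatest:
  "X \<in> Ob C \<Longrightarrow> S \<subseteq> Fib p X \<Longrightarrow> m \<in> Fib p X \<Longrightarrow> (\<And>s. s \<in> S \<Longrightarrow> le p m s) \<Longrightarrow>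
   le p m (fmeet p X S)"
  using fmeet_is_meet unfolding is_meet_def by blast

lemma fmeet_antimono:
  "X \<in> Ob C \<Longrightarrow> S \<subseteq> T \<Longrightarrow> T \<subseteq> Fib p X \<Longrightarrow> le p (fmeet p X T) (fmeet p X S)"
  by (intro fmeet_greatest fmeet_in_Fib fmeet_lower) auto

lemma rdx_mono:
  assumes f: "f \<in> Hom C X Y" and PQ: "P \<in> Fib p Y" "Q \<in> Fib p Y" "le p P Q"
  shows "le p (rdx p f P) (rdx p f Q)"
proof -
  have X: "X \<in> Ob C" and Y: "Y \<in> Ob C" using Hom_Ob[OF f] by auto
  have "fmeet p Y {P, Q} = P"
    using PQ fibre_refl[OF Y] by (intro fmeet_eqI[OF Y]) (auto simp: is_meet_def)
  then have "rdx p f P = fmeet p X {rdx p f P, rdx p f Q}"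
    using rdx_fmeet[OF f, of "{P, Q}"] PQ by simp
  also have "le p \<dots> (rdx p f Q)"
    using rdx_in_Fib[OF f] PQ by (intro fmeet_lower[OF X]) auto
  finally show ?thesis .
qed

lemma fgfp_upperbound:
  assumes X: "X \<in> Ob C"
    and closed: "\<And>R. R \<in> Fib p X \<Longrightarrow> F R \<in> Fib p X"
    and mono: "\<And>R R'. R \<in> Fib p X \<Longrightarrow> R' \<in> Fib p X \<Longrightarrow> le p R R' \<Longrightarrow> le p (F R) (F R')"
    and post: "P \<in> Fib p X" "le p P (F P)"
  shows "le p P (fgfp p X F)"
proof -
  have "\<exists>u\<in>Fib p X. F u = u \<and> (\<forall>S\<in>Fib p X. F S = S \<longrightarrow> le p S u) \<and> le p P u"
    by (rule post_fixed_point_below_greatest_fixed_point[where glb = "fmeet p X"])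
      (fact fibre_refl[OF X] fibre_antisym[OF X] fibre_trans[OF X] fmeet_in_Fib[OF X]
        fmeet_lower[OF X] fmeet_greatest[OF X] closed mono post)+
  then obtain u where u: "u \<in> Fib p X" "F u = u" "\<forall>S\<in>Fib p X. F S = S \<longrightarrow> le p S u"
    and "le p P u"
    by blast
  moreover have "fgfp p X F = u"
    unfolding fgfp_def
  proof (rule the_equality)
    show "R = u" if "R \<in> Fib p X \<and> F R = R \<and> (\<forall>S\<in>Fib p X. F S = S \<longrightarrow> le p S R)" for R
      using that u fibre_antisym[OF X, of R u] by simp
  qed (use u in simp)
  ultimately show ?thesis by simp
qed

end

locale codensity_setting = clat_fibred_category C p
  for C :: "('o, 'a) cat" and p :: "('o, 'a, 'e) fibr" +
  fixes Bo :: "'o \<Rightarrow> 'o" and Ba :: "'a \<Rightarrow> 'a" and W :: 'o and Wl :: 'e and tau :: "'l \<Rightarrow> 'a"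
  assumes endofunctor: "endofunctor C Bo Ba"
    and Wl_in_Fib: "Wl \<in> Fib p W"
    and tau_in_Hom: "tau l \<in> Hom C (Bo W) W"
begin

lemma Bo_Ob: "X \<in> Ob C \<Longrightarrow> Bo X \<in> Ob C"
  using endofunctor unfolding endofunctor_def by (elim conjE) metis

lemma Ba_in_Hom: "f \<in> Hom C X Y \<Longrightarrow> Ba f \<in> Hom C (Bo X) (Bo Y)"
  using endofunctor unfolding endofunctor_def by (elim conjE) metis

lemma modal_test_in_Hom: "k \<in> Hom C X W \<Longrightarrow> comp C (tau l) (Ba k) \<in> Hom C (Bo X) W"
  by (rule comp_in_Hom[OF Ba_in_Hom tau_in_Hom])

lemma pullback_in_Fib: "k \<in> Hom C X W \<Longrightarrow> rdx p k Wl \<in> Fib p X"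
  by (rule rdx_in_Fib[OF _ Wl_in_Fib])

abbreviation lifting :: "'o \<Rightarrow> 'e \<Rightarrow> 'e" where
  "lifting \<equiv> codensity_lifting C p Bo Ba W Wl tau"

lemma codensity_lifting_in_Fib: "X \<in> Ob C \<Longrightarrow> lifting X R \<in> Fib p (Bo X)"
  unfolding codensity_lifting_def
  by (rule fmeet_in_Fib[OF Bo_Ob]) (auto intro: pullback_in_Fib modal_test_in_Hom)

lemma codensity_lifting_mono:
  assumes X: "X \<in> Ob C" and R: "R \<in> Fib p X" "R' \<in> Fib p X" "le p R R'"
  shows "le p (lifting X R) (lifting X R')"
  unfolding codensity_lifting_def
proof (rule fmeet_antimono[OF Bo_Ob[OF X]])
  have "le p R (rdx p k Wl)" if "k \<in> Hom C X W" "le p R' (rdx p k Wl)" for k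
    using fibre_trans[OF X R(1,2) pullback_in_Fib[OF that(1)] R(3) that(2)] .
  then show "{rdx p (comp C (tau l) (Ba k)) Wl | l k. k \<in> Hom C X W \<and> le p R' (rdx p k Wl)}
    \<subseteq> {rdx p (comp C (tau l) (Ba k)) Wl | l k. k \<in> Hom C X W \<and> le p R (rdx p k Wl)}"
    by blast
qed (auto intro: pullback_in_Fib modal_test_in_Hom)

lemma codensity_bisim_coinduct:
  assumes X: "X \<in> Ob C" and x: "x \<in> Hom C X (Bo X)"
    and post: "P \<in> Fib p X" "le p P (rdx p x (lifting X P))"
  shows "le p P (codensity_bisim C p Bo Ba W Wl tau X x)"
  unfolding codensity_bisim_def
proof (rule fgfp_upperbound[where F = "\<lambda>R. rdx p x (lifting X R)", OF X _ _ post])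
  show "rdx p x (lifting X R) \<in> Fib p X" for R
    using rdx_in_Fib[OF x codensity_lifting_in_Fib[OF X]] .
  show "le p (rdx p x (lifting X R)) (rdx p x (lifting X R'))"
    if "R \<in> Fib p X" "R' \<in> Fib p X" "le p R R'" for R R'
    using rdx_mono[OF x codensity_lifting_in_Fib[OF X] codensity_lifting_in_Fib[OF X]
        codensity_lifting_mono[OF X that]] .
qed

lemma approximating_family_post_fixed_point:
  assumes X: "X \<in> Ob C" and x: "x \<in> Hom C X (Bo X)"
    and approx: "approximating_family C p Bo Ba W Wl tau X S"
    and modal_closed: "\<And>k l. k \<in> S \<Longrightarrow> comp C (tau l) (comp C (Ba k) x) \<in> S"
  defines "M \<equiv> fmeet p X {rdx p k Wl | k. k \<in> S}"
  shows "le p M (rdx p x (lifting X M))"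
proof -
  have S: "S \<subseteq> Hom C X W" using approx unfolding approximating_family_def by blast
  define Tests where "Tests = {rdx p (comp C (tau l') (Ba k')) Wl | k' l'. k' \<in> S}"
  define N where "N = fmeet p (Bo X) Tests"
  have M_in_Fib: "M \<in> Fib p X"
    unfolding M_def using S by (intro fmeet_in_Fib[OF X]) (auto intro: pullback_in_Fib)
  have Tests_in_Fib: "Tests \<subseteq> Fib p (Bo X)"
    unfolding Tests_def using S by (auto intro: pullback_in_Fib modal_test_in_Hom)
  have N_in_Fib: "N \<in> Fib p (Bo X)"
    unfolding N_def using fmeet_in_Fib[OF Bo_Ob[OF X] Tests_in_Fib] .
  have "le p N (lifting X M)"
    unfolding codensity_lifting_def
  proof (rule fmeet_greatest[OF Bo_Ob[OF X] _ N_in_Fib])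
    show "{rdx p (comp C (tau l) (Ba h)) Wl | l h. h \<in> Hom C X W \<and> le p M (rdx p h Wl)}
      \<subseteq> Fib p (Bo X)"
      by (auto intro: pullback_in_Fib modal_test_in_Hom)
    fix t assume "t \<in> {rdx p (comp C (tau l) (Ba h)) Wl | l h. h \<in> Hom C X W \<and> le p M (rdx p h Wl)}"
    then show "le p N t"
      using approx unfolding approximating_family_def M_def N_def Tests_def by blast
  qed
  moreover have "le p M (rdx p x N)"
  proof -
    have "le p M t" if "t \<in> rdx p x ` Tests" for t
    proof -
      from that obtain k l where k: "k \<in> S" and t: "t = rdx p x (rdx p (comp C (tau l) (Ba k)) Wl)"
        unfolding Tests_def by blast
      have k_Hom: "k \<in> Hom C X W" using k S by blast
      have "t = rdx p (comp C (comp C (tau l) (Ba k)) x) Wl"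
        using t rdx_comp[OF x modal_test_in_Hom[OF k_Hom] Wl_in_Fib] by simp
      also have "\<dots> = rdx p (comp C (tau l) (comp C (Ba k) x)) Wl"
        using comp_Hom_assoc[OF x Ba_in_Hom[OF k_Hom] tau_in_Hom] by simp
      finally show ?thesis
        unfolding M_def using modal_closed[OF k] S
        by (intro fmeet_lower[OF X]) (auto intro: pullback_in_Fib)
    qed
    then have "le p M (fmeet p X (rdx p x ` Tests))"
      using Tests_in_Fib rdx_in_Fib[OF x] by (intro fmeet_greatest[OF X _ M_in_Fib]) auto
    then show ?thesis
      unfolding N_def using rdx_fmeet[OF x Tests_in_Fib] by simp
  qed
  ultimately show ?thesis
    using fibre_trans[OF X] M_in_Fib rdx_in_Fib[OF x] N_in_Fib codensity_lifting_in_Fib[OF X]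
      rdx_mono[OF x N_in_Fib codensity_lifting_in_Fib[OF X]] by blast
qed

lemma approximating_family_below_codensity_bisim:
  assumes X: "X \<in> Ob C" and x: "x \<in> Hom C X (Bo X)"
    and approx: "approximating_family C p Bo Ba W Wl tau X S"
    and modal_closed: "\<And>k l. k \<in> S \<Longrightarrow> comp C (tau l) (comp C (Ba k) x) \<in> S"
  shows "le p (fmeet p X {rdx p k Wl | k. k \<in> S}) (codensity_bisim C p Bo Ba W Wl tau X x)"
proof (rule codensity_bisim_coinduct[OF X x])
  show "le p (fmeet p X {rdx p k Wl | k. k \<in> S})
          (rdx p x (lifting X (fmeet p X {rdx p k Wl | k. k \<in> S})))"
    using approximating_family_post_fixed_point[OF assms] .
  show "fmeet p X {rdx p k Wl | k. k \<in> S} \<in> Fib p X"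
    using approx unfolding approximating_family_def
    by (intro fmeet_in_Fib[OF X]) (auto intro: pullback_in_Fib)
qed

end

theorem mainTheorem2:
  fixes C :: "('o, 'a) cat" and p :: "('o, 'a, 'e) fibr"
    and rank :: "'s \<Rightarrow> nat" and tau :: "'l \<Rightarrow> 'a"
  assumes "expressivity_situation C p Bo Ba W pw prj tup Wl rank fsig tau"
    and "X \<in> Ob C" and "x \<in> Hom C X (Bo X)"
    and "approximating_family C p Bo Ba W Wl tau X
           {sem C Ba tup fsig tau X x \<phi> | \<phi>. wf_form rank \<phi>}"
  shows "le p (fmeet p X {rdx p (sem C Ba tup fsig tau X x \<phi>) Wl | \<phi>. wf_form rank \<phi>})
              (codensity_bisim C p Bo Ba W Wl tau X x)"
proof -
  interpret codensity_setting C p Bo Ba W Wl tau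
    using assms(1) unfolding expressivity_situation_def by unfold_locales auto
  let ?S = "{sem C Ba tup fsig tau X x \<phi> | \<phi>. wf_form rank \<phi>}"
  have "comp C (tau l) (comp C (Ba k) x) \<in> ?S" if "k \<in> ?S" for k l
  proof -
    from that obtain \<phi> where "wf_form rank \<phi>" "k = sem C Ba tup fsig tau X x \<phi>" by blast
    then show ?thesis by (intro CollectI exI[of _ "Mod l \<phi>"]) simp
  qed
  from approximating_family_below_codensity_bisim[OF assms(2-4) this]
  show ?thesis by (simp add: setcompr_eq_image image_image)
qed

end
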